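(* Let $u_0\in H^2(\mathbb{R}_+)$ and let $$u(t,x)=\frac{1}{\sqrt{4\pi t}}\int_0^\infty u_0(y)\left[e^{-\frac{(x-y+t)^2}{4t}}-e^{-x}e^{-\frac{(x+y-t)^2}{4t}}\right]dy,$$ which is a solution $u\in C(\mathbb{R}_+,H^2(\mathbb{R}_+))$ of the boundary-value problem $u_t=u_x+u_{xx}$ for $x>0$, $u(t,0)=0$, $u(t,x)\to0$ as $x\to+\infty$, with $u(0,x)=u_0(x)$. Then $$\|u(t,\cdot)\|_{W^{2,\infty}(\mathbb{R}_+)}\to0\quad\text{as } t\to\infty.$$
   Context: $\mathbb{R}_+=(0,\infty)$. *)

theory Defs
  imports "HOL-Analysis.Analysis"
begin

definition test_fun_pos :: "(real \<Rightarrow> real) \<Rightarrow> bool" where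
  "test_fun_pos \<phi> \<longleftrightarrow>
     (\<forall>n x. (deriv ^^ n) \<phi> differentiable (at x)) \<and>
     (\<exists>a b. 0 < a \<and> a < b \<and> (\<forall>x. x \<notin> {a..b} \<longrightarrow> \<phi> x = 0))"

definition L2_pos :: "(real \<Rightarrow> real) \<Rightarrow> bool" where
  "L2_pos f \<longleftrightarrow> set_borel_measurable lborel {0<..} f \<and>
                  set_integrable lborel {0<..} (\<lambda>x. (f x)\<^sup>2)"

definition weak_deriv_pos :: "(real \<Rightarrow> real) \<Rightarrow> (real \<Rightarrow> real) \<Rightarrow> bool" where
  "weak_deriv_pos f g \<longleftrightarrow>
     (\<forall>\<phi>. test_fun_pos \<phi> \<longrightarrow>
        (LBINT x:{0<..}. f x * deriv \<phi> x) = - (LBINT x:{0<..}. g x * \<phi> x))"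

definition H2_pos :: "(real \<Rightarrow> real) \<Rightarrow> bool" where
  "H2_pos f \<longleftrightarrow> L2_pos f \<and>
     (\<exists>v w. L2_pos v \<and> L2_pos w \<and> weak_deriv_pos f v \<and> weak_deriv_pos v w)"

definition sol :: "(real \<Rightarrow> real) \<Rightarrow> real \<Rightarrow> real \<Rightarrow> real" where
  "sol u0 t x = 1 / sqrt (4 * pi * t) *
     (LBINT y:{0<..}. u0 y * (exp (- ((x - y + t)\<^sup>2) / (4 * t))
                              - exp (- x) * exp (- ((x + y - t)\<^sup>2) / (4 * t))))"

end

theory Submission
  imports Defs "HOL-Probability.Distributions" "HOL-Real_Asymp.Real_Asymp"
begin

(* Extend u0 by zero to v in L^2(R). Then u(t,x) = (F(x) - e^(-x) G(x)) / sqrt(4 pi t), where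
   F and G integrate v against the Gaussian exp(-z^2/(4t)) at z = x - y + t and z = x + y - t.
   Differentiating in x under the integral only replaces the Gaussian by its derivatives, and for
   t >= 1 the squares of the Gaussian and of its first two derivatives are at most 5 exp(-z^2/(4t)),
   whose integral is sqrt(4 pi t). By Cauchy-Schwarz, u, u_x and u_xx are therefore bounded by a
   multiple of ||u0||_2 t^(-1/4), uniformly in x > 0; only u0 in L^2 is needed. *)

lemma abs_mult_le_half_sum_squares: "\<bar>a * b\<bar> \<le> (a\<^sup>2 + b\<^sup>2) / 2"
  for a b :: real
  using sum_squares_bound[of "\<bar>a\<bar>" "\<bar>b\<bar>"] by (simp add: abs_mult)

lemma Cauchy_Schwarz_integral:
  fixes f g :: "'a \<Rightarrow> real"
  assumes [measurable]: "f \<in> borel_measurable M" "g \<in> borel_measurable M"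
    and f2: "integrable M (\<lambda>x. (f x)\<^sup>2)" and g2: "integrable M (\<lambda>x. (g x)\<^sup>2)"
  shows "integrable M (\<lambda>x. f x * g x)"
    and "\<bar>\<integral>x. f x * g x \<partial>M\<bar> \<le> sqrt (\<integral>x. (f x)\<^sup>2 \<partial>M) * sqrt (\<integral>x. (g x)\<^sup>2 \<partial>M)"
proof -
  have bound: "norm (f x * g x) \<le> norm (((f x)\<^sup>2 + (g x)\<^sup>2) / 2)" for x
    using abs_mult_le_half_sum_squares[of "f x" "g x"] by simp
  have "integrable M (\<lambda>x. ((f x)\<^sup>2 + (g x)\<^sup>2) / 2)"
    using f2 g2 by (intro integrable_divide Bochner_Integration.integrable_add)
  then show int: "integrable M (\<lambda>x. f x * g x)"
    by (rule Bochner_Integration.integrable_bound) (use bound in auto)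
  define I where "I = (\<integral>x. \<bar>f x * g x\<bar> \<partial>M)"
  have "(\<integral>\<^sup>+x. ennreal \<bar>f x\<bar> * ennreal \<bar>g x\<bar> \<partial>M)\<^sup>2
      \<le> (\<integral>\<^sup>+x. (ennreal \<bar>f x\<bar>)\<^sup>2 \<partial>M) * (\<integral>\<^sup>+x. (ennreal \<bar>g x\<bar>)\<^sup>2 \<partial>M)"
    by (rule Cauchy_Schwarz_nn_integral) measurable
  also have "(\<integral>\<^sup>+x. ennreal \<bar>f x\<bar> * ennreal \<bar>g x\<bar> \<partial>M) = ennreal I"
    using integrable_abs[OF int] unfolding I_def
    by (simp add: abs_mult nn_integral_eq_integral flip: ennreal_mult')
  also have "(\<integral>\<^sup>+x. (ennreal \<bar>f x\<bar>)\<^sup>2 \<partial>M) = ennreal (\<integral>x. (f x)\<^sup>2 \<partial>M)"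
    using f2 by (simp add: ennreal_power nn_integral_eq_integral)
  also have "(\<integral>\<^sup>+x. (ennreal \<bar>g x\<bar>)\<^sup>2 \<partial>M) = ennreal (\<integral>x. (g x)\<^sup>2 \<partial>M)"
    using g2 by (simp add: ennreal_power nn_integral_eq_integral)
  finally have "ennreal (I\<^sup>2) \<le> ennreal ((\<integral>x. (f x)\<^sup>2 \<partial>M) * (\<integral>x. (g x)\<^sup>2 \<partial>M))"
    by (simp add: I_def ennreal_power ennreal_mult')
  then have "I\<^sup>2 \<le> (\<integral>x. (f x)\<^sup>2 \<partial>M) * (\<integral>x. (g x)\<^sup>2 \<partial>M)"
    by (simp add: ennreal_le_iff)
  then have "I \<le> sqrt (\<integral>x. (f x)\<^sup>2 \<partial>M) * sqrt (\<integral>x. (g x)\<^sup>2 \<partial>M)"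
    by (simp add: real_le_rsqrt flip: real_sqrt_mult)
  then show "\<bar>\<integral>x. f x * g x \<partial>M\<bar> \<le> sqrt (\<integral>x. (f x)\<^sup>2 \<partial>M) * sqrt (\<integral>x. (g x)\<^sup>2 \<partial>M)"
    using integral_abs_bound[of M "\<lambda>x. f x * g x"] unfolding I_def by linarith
qed

lemma integral_dominated_convergence_at:
  fixes s :: "'c::first_countable_topology \<Rightarrow> 'a \<Rightarrow> 'b::{banach, second_countable_topology}"
    and w :: "'a \<Rightarrow> real"
  assumes "f \<in> borel_measurable M" "\<And>h. s h \<in> borel_measurable M" "integrable M w"
    and lim: "AE y in M. ((\<lambda>h. s h y) \<longlongrightarrow> f y) (at x0)"
    and bound: "\<forall>\<^sub>F h in at x0. AE y in M. norm (s h y) \<le> w y"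
  shows "((\<lambda>h. integral\<^sup>L M (s h)) \<longlongrightarrow> integral\<^sup>L M f) (at x0)"
  unfolding tendsto_at_iff_sequentially comp_def
proof (intro allI impI)
  fix X :: "nat \<Rightarrow> 'c"
  assume "\<forall>i. X i \<in> UNIV - {x0}" and "X \<longlonglongrightarrow> x0"
  then have X: "filterlim X (at x0) sequentially"
    by (intro filterlim_atI) auto
  from filterlim_iff[THEN iffD1, OF X, rule_format, OF bound]
  obtain N where w: "\<And>n. N \<le> n \<Longrightarrow> AE y in M. norm (s (X n) y) \<le> w y"
    by (auto simp: eventually_sequentially)
  show "(\<lambda>n. integral\<^sup>L M (s (X n))) \<longlonglongrightarrow> integral\<^sup>L M f"
  proof (rule LIMSEQ_offset, rule integral_dominated_convergence)
    show "AE y in M. norm (s (X (n + N)) y) \<le> w y" for n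
      by (rule w) auto
    show "AE y in M. (\<lambda>n. s (X (n + N)) y) \<longlonglongrightarrow> f y"
      using lim
    proof eventually_elim
      fix y assume "((\<lambda>h. s h y) \<longlongrightarrow> f y) (at x0)"
      then show "(\<lambda>n. s (X (n + N)) y) \<longlonglongrightarrow> f y"
        by (intro LIMSEQ_ignore_initial_segment filterlim_compose[OF _ X])
    qed
  qed fact+
qed

lemma has_real_derivative_integral:
  fixes f f' :: "real \<Rightarrow> 'a \<Rightarrow> real"
  assumes int: "\<And>x. integrable M (f x)"
    and der: "\<And>x y. ((\<lambda>x. f x y) has_real_derivative f' x y) (at x)"
    and meas: "f' x0 \<in> borel_measurable M"
    and D: "integrable M D"
    and bound: "\<And>x y. \<bar>x - x0\<bar> \<le> 1 \<Longrightarrow> \<bar>f' x y\<bar> \<le> D y"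
  shows "((\<lambda>x. \<integral>y. f x y \<partial>M) has_real_derivative (\<integral>y. f' x0 y \<partial>M)) (at x0)"
proof -
  define Q where "Q = (\<lambda>h y. (f h y - f x0 y) / (h - x0))"
  have lipschitz: "\<bar>f h y - f x0 y\<bar> \<le> D y * \<bar>h - x0\<bar>" if "\<bar>h - x0\<bar> \<le> 1" for h y
  proof -
    have "norm (f h y - f x0 y) \<le> D y * norm (h - x0)"
    proof (rule field_differentiable_bound[where S = "{x0 - 1 .. x0 + 1}"])
      show "((\<lambda>x. f x y) has_field_derivative f' z y) (at z within {x0 - 1 .. x0 + 1})" for z
        using der by (rule has_field_derivative_at_within)
      show "norm (f' z y) \<le> D y" if "z \<in> {x0 - 1 .. x0 + 1}" for z
        using that bound[of z y] by (simp add: abs_le_iff)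
    qed (use that in auto)
    then show ?thesis by simp
  qed
  have "((\<lambda>h. \<integral>y. Q h y \<partial>M) \<longlongrightarrow> (\<integral>y. f' x0 y \<partial>M)) (at x0)"
  proof (rule integral_dominated_convergence_at[OF meas _ D])
    show "Q h \<in> borel_measurable M" for h
      unfolding Q_def using int by (intro borel_measurable_divide borel_measurable_diff) auto
    show "AE y in M. ((\<lambda>h. Q h y) \<longlongrightarrow> f' x0 y) (at x0)"
      using der by (simp add: Q_def has_field_derivative_iff)
    have "\<bar>Q h y\<bar> \<le> D y" if "\<bar>h - x0\<bar> < 1" for h y
      using lipschitz[of h y] bound[of x0 y] that
      by (cases "h = x0") (auto simp: Q_def abs_divide divide_le_eq)
    moreover have "\<forall>\<^sub>F h in at x0. \<bar>h - x0\<bar> < 1"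
      using eventually_at_ball[of 1 x0 UNIV] by (simp add: dist_real_def abs_minus_commute)
    ultimately show "\<forall>\<^sub>F h in at x0. AE y in M. norm (Q h y) \<le> D y"
      by (auto elim!: eventually_mono intro!: AE_I2)
  qed
  moreover have "(\<integral>y. Q h y \<partial>M) = ((\<integral>y. f h y \<partial>M) - (\<integral>y. f x0 y \<partial>M)) / (h - x0)" for h
    using int by (simp add: Q_def)
  ultimately show ?thesis
    by (simp add: has_field_derivative_iff)
qed

definition kernel_integral :: "(real \<Rightarrow> real) \<Rightarrow> (real \<Rightarrow> real) \<Rightarrow> real \<Rightarrow> real \<Rightarrow> real \<Rightarrow> real"
  where "kernel_integral v k c b x = (\<integral>y. v y * k (x + c * y + b) \<partial>lborel)"

lemma abs_kernel_integral_le: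
  fixes v k :: "real \<Rightarrow> real"
  assumes v: "v \<in> borel_measurable lborel" "integrable lborel (\<lambda>y. (v y)\<^sup>2)"
    and k [measurable]: "k \<in> borel_measurable borel"
    and k2: "integrable lborel (\<lambda>z. (k z)\<^sup>2)"
    and c: "c \<noteq> 0"
  shows "integrable lborel (\<lambda>y. v y * k (x + c * y + b))"
    and "\<bar>kernel_integral v k c b x\<bar>
           \<le> sqrt (\<integral>y. (v y)\<^sup>2 \<partial>lborel) * sqrt ((\<integral>z. (k z)\<^sup>2 \<partial>lborel) / \<bar>c\<bar>)"
proof -
  have shift: "x + c * y + b = (x + b) + c * y" for y
    by simp
  have "integrable lborel (\<lambda>y. (k ((x + b) + c * y))\<^sup>2)"
    using lborel_integrable_real_affine[OF k2 c] .
  then have int: "integrable lborel (\<lambda>y. (k (x + c * y + b))\<^sup>2)"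
    by (simp only: shift)
  have "(\<integral>z. (k z)\<^sup>2 \<partial>lborel) = \<bar>c\<bar> * (\<integral>y. (k ((x + b) + c * y))\<^sup>2 \<partial>lborel)"
    using lborel_integral_real_affine[OF c, of "\<lambda>z. (k z)\<^sup>2" "x + b"] by simp
  then have eq: "(\<integral>y. (k (x + c * y + b))\<^sup>2 \<partial>lborel) = (\<integral>z. (k z)\<^sup>2 \<partial>lborel) / \<bar>c\<bar>"
    using c by (simp only: shift) simp
  show "integrable lborel (\<lambda>y. v y * k (x + c * y + b))"
    using Cauchy_Schwarz_integral(1)[OF v(1) _ v(2) int] by simp
  show "\<bar>kernel_integral v k c b x\<bar>
           \<le> sqrt (\<integral>y. (v y)\<^sup>2 \<partial>lborel) * sqrt ((\<integral>z. (k z)\<^sup>2 \<partial>lborel) / \<bar>c\<bar>)"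
    using Cauchy_Schwarz_integral(2)[OF v(1) _ v(2) int] by (simp add: eq kernel_integral_def)
qed

lemma has_real_derivative_kernel_integral:
  fixes v k k' K :: "real \<Rightarrow> real"
  assumes v: "v \<in> borel_measurable lborel" "integrable lborel (\<lambda>y. (v y)\<^sup>2)"
    and k: "\<And>z. (k has_real_derivative k' z) (at z)" "integrable lborel (\<lambda>z. (k z)\<^sup>2)"
    and k' [measurable]: "k' \<in> borel_measurable borel"
    and K: "integrable lborel K" "\<And>z d. \<bar>d\<bar> \<le> 1 \<Longrightarrow> (k' (z + d))\<^sup>2 \<le> K z"
    and c: "c \<noteq> 0"
  shows "(kernel_integral v k c b has_real_derivative kernel_integral v k' c b x0) (at x0)"
  unfolding kernel_integral_def[abs_def]
proof (rule has_real_derivative_integral)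
  have "continuous_on UNIV k"
    using k(1) DERIV_isCont by (blast intro: continuous_at_imp_continuous_on)
  then have "k \<in> borel_measurable borel"
    by (rule borel_measurable_continuous_onI)
  then show "integrable lborel (\<lambda>y. v y * k (x + c * y + b))" for x
    using abs_kernel_integral_le(1)[OF v _ k(2) c] by blast
  show "((\<lambda>x. v y * k (x + c * y + b)) has_real_derivative v y * k' (x + c * y + b)) (at x)" for x y
  proof -
    have "((\<lambda>x. k (x + c * y + b)) has_real_derivative k' (x + c * y + b) * 1) (at x)"
      by (rule DERIV_chain2[OF k(1)]) (auto intro!: derivative_eq_intros)
    then show ?thesis
      by (simp add: DERIV_cmult)
  qed
  show "(\<lambda>y. v y * k' (x0 + c * y + b)) \<in> borel_measurable lborel"
    using v(1) by measurable
  have "integrable lborel (\<lambda>y. K ((x0 + b) + c * y))"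
    using lborel_integrable_real_affine[OF K(1) c] .
  then have "integrable lborel (\<lambda>y. K (x0 + c * y + b))"
    by (simp add: add_ac)
  then show "integrable lborel (\<lambda>y. ((v y)\<^sup>2 + K (x0 + c * y + b)) / 2)"
    using v(2) by (intro integrable_divide Bochner_Integration.integrable_add)
  show "\<bar>v y * k' (x + c * y + b)\<bar> \<le> ((v y)\<^sup>2 + K (x0 + c * y + b)) / 2"
    if "\<bar>x - x0\<bar> \<le> 1" for x y
  proof -
    have "\<bar>v y * k' (x + c * y + b)\<bar> \<le> ((v y)\<^sup>2 + (k' (x + c * y + b))\<^sup>2) / 2"
      by (rule abs_mult_le_half_sum_squares)
    also have "(k' (x + c * y + b))\<^sup>2 \<le> K (x0 + c * y + b)"
      using K(2)[OF that, of "x0 + c * y + b"] by (simp add: algebra_simps)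
    finally show ?thesis
      by simp
  qed
qed

definition gauss :: "real \<Rightarrow> real \<Rightarrow> real" where
  "gauss t z = exp (- (z\<^sup>2) / (4 * t))"

definition gauss_deriv :: "real \<Rightarrow> real \<Rightarrow> real" where
  "gauss_deriv t z = - z / (2 * t) * gauss t z"

definition gauss_deriv2 :: "real \<Rightarrow> real \<Rightarrow> real" where
  "gauss_deriv2 t z = (z\<^sup>2 / (4 * t\<^sup>2) - 1 / (2 * t)) * gauss t z"

lemma gauss_pos: "0 < gauss t z"
  by (simp add: gauss_def)

lemma gauss_le_one: "0 < t \<Longrightarrow> gauss t z \<le> 1"
  by (simp add: gauss_def divide_nonpos_pos)

lemma has_real_derivative_gauss: "t \<noteq> 0 \<Longrightarrow> (gauss t has_real_derivative gauss_deriv t z) (at z)"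
  unfolding gauss_def gauss_deriv_def
  by (auto intro!: derivative_eq_intros simp: field_simps power2_eq_square)

lemma has_real_derivative_gauss_deriv:
  "t \<noteq> 0 \<Longrightarrow> (gauss_deriv t has_real_derivative gauss_deriv2 t z) (at z)"
  unfolding gauss_deriv_def gauss_deriv2_def
  by (auto intro!: derivative_eq_intros has_real_derivative_gauss
      simp: gauss_deriv_def field_simps power2_eq_square)

lemma borel_measurable_gauss [measurable]:
  "gauss t \<in> borel_measurable borel" "gauss_deriv t \<in> borel_measurable borel"
  "gauss_deriv2 t \<in> borel_measurable borel"
  unfolding gauss_def[abs_def] gauss_deriv_def[abs_def] gauss_deriv2_def[abs_def] by measurable

lemma has_bochner_integral_gauss:
  assumes "0 < t"
  shows "has_bochner_integral lborel (gauss t) (sqrt (4 * pi * t))"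
proof -
  have "sqrt (4 * pi * t) * normal_density 0 (sqrt (2 * t)) z = gauss t z" for z
    using assms by (simp add: normal_density_def gauss_def real_sqrt_mult power_mult_distrib)
  moreover have "has_bochner_integral lborel (normal_density 0 (sqrt (2 * t))) 1"
    using assms by (simp add: has_bochner_integral_iff)
  then have "has_bochner_integral lborel
      (\<lambda>z. sqrt (4 * pi * t) * normal_density 0 (sqrt (2 * t)) z) (sqrt (4 * pi * t))"
    using has_bochner_integral_mult_right by fastforce
  ultimately show ?thesis
    by simp
qed

lemma gauss_sq_le: "0 < t \<Longrightarrow> (gauss t z)\<^sup>2 \<le> gauss t z"
  using gauss_le_one[of t z] gauss_pos[of t z] by (simp add: power2_eq_square mult_left_le)

lemma gauss_deriv_sq_le:
  assumes "1 \<le> t"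
  shows "(gauss_deriv t z)\<^sup>2 \<le> gauss t z"
proof -
  define s where "s = z\<^sup>2 / (4 * t)"
  have s: "0 \<le> s" "gauss t z = exp (- s)"
    using assms by (simp_all add: s_def gauss_def)
  have "s / t = z\<^sup>2 / (2 * t)\<^sup>2"
    by (simp add: s_def power2_eq_square)
  then have "(gauss_deriv t z)\<^sup>2 = s / t * exp (- s) * gauss t z"
    by (simp add: gauss_deriv_def s(2) power_mult_distrib power_divide power2_eq_square)
  also have "\<dots> \<le> 1 * gauss t z"
  proof (rule mult_right_mono)
    have "s / t \<le> s"
      using assms s(1) by (simp add: divide_le_eq mult_le_cancel_left1)
    also have "s \<le> exp s"
      using exp_ge_add_one_self[of s] by linarith
    finally have "s / t * exp (- s) \<le> exp s * exp (- s)"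
      by (rule mult_right_mono) simp
    then show "s / t * exp (- s) \<le> 1"
      by (simp add: exp_minus_inverse)
  qed (simp add: s)
  finally show ?thesis
    by simp
qed

lemma gauss_deriv2_sq_le:
  assumes "1 \<le> t"
  shows "(gauss_deriv2 t z)\<^sup>2 \<le> 5 * gauss t z"
proof -
  define s where "s = z\<^sup>2 / (4 * t)"
  have s: "0 \<le> s" "gauss t z = exp (- s)"
    using assms by (simp_all add: s_def gauss_def)
  have "z\<^sup>2 / (4 * t\<^sup>2) - 1 / (2 * t) = (s - 1 / 2) / t"
    using assms by (simp add: s_def field_simps power2_eq_square)
  then have "(gauss_deriv2 t z)\<^sup>2 = (s - 1 / 2)\<^sup>2 / t\<^sup>2 * exp (- s) * gauss t z"
    by (simp add: gauss_deriv2_def s(2) power_mult_distrib power_divide power2_eq_square)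
  also have "\<dots> \<le> 5 * gauss t z"
  proof (rule mult_right_mono)
    have "(s - 1 / 2)\<^sup>2 / t\<^sup>2 \<le> (s - 1 / 2)\<^sup>2 / 1"
      using assms by (intro divide_left_mono) (auto simp: one_le_power)
    also have "\<dots> \<le> 2 * s\<^sup>2 + 1 / 2"
    proof -
      have "(s - 1 / 2)\<^sup>2 + (s + 1 / 2)\<^sup>2 = 2 * s\<^sup>2 + 1 / 2"
        by (simp add: power2_eq_square algebra_simps)
      then show ?thesis
        using zero_le_power2[of "s + 1 / 2"] by linarith
    qed
    also have "\<dots> \<le> 5 * exp s"
      using exp_lower_Taylor_quadratic[OF s(1)] s(1) zero_le_power2[of s] by linarith
    finally have "(s - 1 / 2)\<^sup>2 / t\<^sup>2 * exp (- s) \<le> 5 * exp s * exp (- s)"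
      by (rule mult_right_mono) simp
    then show "(s - 1 / 2)\<^sup>2 / t\<^sup>2 * exp (- s) \<le> 5"
      by (simp add: exp_minus_inverse mult.assoc)
  qed (simp add: s)
  finally show ?thesis .
qed

lemma gauss_shift_le:
  assumes t: "1 / 8 \<le> t" and d: "\<bar>d\<bar> \<le> 1"
  shows "gauss t (z + d) \<le> exp 2 * gauss (2 * t) z"
proof -
  have "z\<^sup>2 - 2 * (z + d)\<^sup>2 = 2 * d\<^sup>2 - (z + 2 * d)\<^sup>2"
    by (simp add: power2_eq_square algebra_simps)
  also have "\<dots> \<le> 16 * t"
    using t abs_square_le_1[of d] d zero_le_power2[of "z + 2 * d"] by linarith
  finally have "- ((z + d)\<^sup>2) / (4 * t) \<le> 2 + - (z\<^sup>2) / (4 * (2 * t))"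
    using t by (simp add: field_simps)
  then show ?thesis
    by (simp add: gauss_def flip: exp_add)
qed

definition gauss_dominated :: "real \<Rightarrow> (real \<Rightarrow> real) \<Rightarrow> bool" where
  "gauss_dominated t q \<longleftrightarrow> q \<in> borel_measurable borel \<and> (\<forall>z. (q z)\<^sup>2 \<le> 5 * gauss t z)"

lemma gauss_dominated_gauss:
  assumes "0 < t"
  shows "gauss_dominated t (gauss t)"
proof -
  have "(gauss t z)\<^sup>2 \<le> 5 * gauss t z" for z
    using gauss_sq_le[OF assms, of z] gauss_pos[of t z] by linarith
  then show ?thesis
    by (simp add: gauss_dominated_def)
qed

lemma gauss_dominated_gauss_deriv:
  assumes "1 \<le> t"
  shows "gauss_dominated t (gauss_deriv t)"
proof -
  have "(gauss_deriv t z)\<^sup>2 \<le> 5 * gauss t z" for z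
    using gauss_deriv_sq_le[OF assms, of z] gauss_pos[of t z] by linarith
  then show ?thesis
    by (simp add: gauss_dominated_def)
qed

lemma gauss_dominated_gauss_deriv2: "1 \<le> t \<Longrightarrow> gauss_dominated t (gauss_deriv2 t)"
  by (simp add: gauss_dominated_def gauss_deriv2_sq_le)

lemma gauss_dominated_square_integrable:
  assumes "0 < t" "gauss_dominated t q"
  shows "integrable lborel (\<lambda>z. (q z)\<^sup>2)" "(\<integral>z. (q z)\<^sup>2 \<partial>lborel) \<le> 5 * sqrt (4 * pi * t)"
proof -
  have [measurable]: "q \<in> borel_measurable borel" and le: "(q z)\<^sup>2 \<le> 5 * gauss t z" for z
    using assms(2) by (auto simp: gauss_dominated_def)
  have int: "integrable lborel (\<lambda>z. 5 * gauss t z)"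
    using has_bochner_integral_gauss[OF assms(1)] by (simp add: has_bochner_integral_iff)
  show q2: "integrable lborel (\<lambda>z. (q z)\<^sup>2)"
    by (rule Bochner_Integration.integrable_bound[OF int])
       (auto intro!: AE_I2 order_trans[OF le] simp: gauss_pos less_imp_le)
  have "(\<integral>z. (q z)\<^sup>2 \<partial>lborel) \<le> (\<integral>z. 5 * gauss t z \<partial>lborel)"
    by (intro integral_mono q2 int le)
  also have "\<dots> = 5 * sqrt (4 * pi * t)"
    using has_bochner_integral_gauss[OF assms(1)] by (simp add: has_bochner_integral_iff)
  finally show "(\<integral>z. (q z)\<^sup>2 \<partial>lborel) \<le> 5 * sqrt (4 * pi * t)" .
qed

lemma abs_kernel_integral_gauss_dominated_le:
  assumes v: "v \<in> borel_measurable lborel" "integrable lborel (\<lambda>y. (v y)\<^sup>2)"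
    and t: "0 < t" and q: "gauss_dominated t q" and c: "\<bar>c\<bar> = 1"
  shows "integrable lborel (\<lambda>y. v y * q (x + c * y + b))"
    and "\<bar>kernel_integral v q c b x\<bar> \<le> sqrt (\<integral>y. (v y)\<^sup>2 \<partial>lborel) * sqrt (5 * sqrt (4 * pi * t))"
proof -
  have "q \<in> borel_measurable borel" and c0: "c \<noteq> 0"
    using q c by (auto simp: gauss_dominated_def)
  note bound = abs_kernel_integral_le[OF v this(1) gauss_dominated_square_integrable(1)[OF t q] c0]
  show "integrable lborel (\<lambda>y. v y * q (x + c * y + b))"
    by (rule bound(1))
  show "\<bar>kernel_integral v q c b x\<bar> \<le> sqrt (\<integral>y. (v y)\<^sup>2 \<partial>lborel) * sqrt (5 * sqrt (4 * pi * t))"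
    using gauss_dominated_square_integrable(2)[OF t q] c
    by (intro order_trans[OF bound(2) mult_left_mono]) simp_all
qed

lemma has_real_derivative_kernel_integral_gauss_dominated:
  assumes v: "v \<in> borel_measurable lborel" "integrable lborel (\<lambda>y. (v y)\<^sup>2)"
    and t: "1 / 8 \<le> t" and q: "gauss_dominated t q" and q': "gauss_dominated t q'"
    and der: "\<And>z. (q has_real_derivative q' z) (at z)" and c: "c \<noteq> 0"
  shows "(kernel_integral v q c b has_real_derivative kernel_integral v q' c b x) (at x)"
proof (rule has_real_derivative_kernel_integral[OF v der _ _ _ _ c])
  show "integrable lborel (\<lambda>z. (q z)\<^sup>2)"
    using t by (intro gauss_dominated_square_integrable(1)[OF _ q]) simp
  show "q' \<in> borel_measurable borel"
    using q' by (simp add: gauss_dominated_def)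
  show "integrable lborel (\<lambda>z. 5 * exp 2 * gauss (2 * t) z)"
    using has_bochner_integral_gauss[of "2 * t"] t by (simp add: has_bochner_integral_iff)
  show "(q' (z + d))\<^sup>2 \<le> 5 * exp 2 * gauss (2 * t) z" if "\<bar>d\<bar> \<le> 1" for z d
  proof -
    have "(q' (z + d))\<^sup>2 \<le> 5 * gauss t (z + d)"
      using q' by (simp add: gauss_dominated_def)
    also have "\<dots> \<le> 5 * (exp 2 * gauss (2 * t) z)"
      using gauss_shift_le[OF t that] by simp
    finally show ?thesis
      by (simp add: mult.assoc)
  qed
qed

definition zero_ext :: "(real \<Rightarrow> real) \<Rightarrow> real \<Rightarrow> real" where
  "zero_ext f y = indicator {0<..} y * f y"

lemma L2_pos_zero_ext:
  assumes "L2_pos f"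
  shows "zero_ext f \<in> borel_measurable lborel" "integrable lborel (\<lambda>y. (zero_ext f y)\<^sup>2)"
    "(\<integral>y. (zero_ext f y)\<^sup>2 \<partial>lborel) = (LBINT y:{0<..}. (f y)\<^sup>2)"
proof -
  have sq: "(zero_ext f y)\<^sup>2 = indicator {0<..} y *\<^sub>R (f y)\<^sup>2" for y
    by (cases "0 < y") (auto simp: zero_ext_def)
  show "zero_ext f \<in> borel_measurable lborel"
    using assms unfolding L2_pos_def set_borel_measurable_def zero_ext_def[abs_def] by simp
  show "integrable lborel (\<lambda>y. (zero_ext f y)\<^sup>2)"
    using assms unfolding L2_pos_def set_integrable_def sq by simp
  show "(\<integral>y. (zero_ext f y)\<^sup>2 \<partial>lborel) = (LBINT y:{0<..}. (f y)\<^sup>2)"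
    unfolding set_lebesgue_integral_def sq ..
qed

lemma sol_eq_kernel_integrals:
  assumes "L2_pos u0" "0 < t"
  shows "sol u0 t x = (kernel_integral (zero_ext u0) (gauss t) (-1) t x
            - exp (- x) * kernel_integral (zero_ext u0) (gauss t) 1 (- t) x) / sqrt (4 * pi * t)"
proof -
  note int = abs_kernel_integral_gauss_dominated_le(1)[OF L2_pos_zero_ext(1,2)[OF assms(1)]
      assms(2) gauss_dominated_gauss[OF assms(2)]]
  have "indicator {0<..} y *\<^sub>R (u0 y * (exp (- ((x - y + t)\<^sup>2) / (4 * t))
                              - exp (- x) * exp (- ((x + y - t)\<^sup>2) / (4 * t))))
          = zero_ext u0 y * gauss t (x - y + t) - exp (- x) * (zero_ext u0 y * gauss t (x + y - t))"
    for y
    by (simp add: zero_ext_def gauss_def algebra_simps)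
  then show ?thesis
    using int[of "-1" x t] int[of 1 x "- t"]
    by (simp add: sol_def set_lebesgue_integral_def kernel_integral_def)
qed

lemma deriv_sol:
  assumes "L2_pos u0" "1 \<le> t"
  defines "F \<equiv> \<lambda>q. kernel_integral (zero_ext u0) q (-1) t"
    and "G \<equiv> \<lambda>q. kernel_integral (zero_ext u0) q 1 (- t)"
  shows "deriv (sol u0 t) = (\<lambda>x. (F (gauss_deriv t) x
            - exp (- x) * (G (gauss_deriv t) x - G (gauss t) x)) / sqrt (4 * pi * t))"
    and "deriv (deriv (sol u0 t)) = (\<lambda>x. (F (gauss_deriv2 t) x
            - exp (- x) * (G (gauss_deriv2 t) x - 2 * G (gauss_deriv t) x + G (gauss t) x))
            / sqrt (4 * pi * t))"
proof -
  note v = L2_pos_zero_ext(1,2)[OF assms(1)]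
  have t: "1 / 8 \<le> t" "0 < t" "t \<noteq> 0"
    using assms(2) by auto
  have "(F q has_real_derivative F q' x) (at x)" "(G q has_real_derivative G q' x) (at x)"
    if "gauss_dominated t q" "gauss_dominated t q'" "\<And>z. (q has_real_derivative q' z) (at z)"
    for q q' x
    unfolding F_def G_def
    by (rule has_real_derivative_kernel_integral_gauss_dominated[OF v t(1) that]; simp)+
  note D = this[OF gauss_dominated_gauss[OF t(2)] gauss_dominated_gauss_deriv[OF assms(2)]
      has_real_derivative_gauss[OF t(3)]]
    this[OF gauss_dominated_gauss_deriv[OF assms(2)] gauss_dominated_gauss_deriv2[OF assms(2)]
      has_real_derivative_gauss_deriv[OF t(3)]]
  have sol: "sol u0 t = (\<lambda>x. (F (gauss t) x - exp (- x) * G (gauss t) x) / sqrt (4 * pi * t))"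
    using sol_eq_kernel_integrals[OF assms(1) t(2)] by (auto simp: F_def G_def)
  have "((\<lambda>x. F (gauss t) x - exp (- x) * G (gauss t) x) has_real_derivative
          F (gauss_deriv t) x - exp (- x) * (G (gauss_deriv t) x - G (gauss t) x)) (at x)" for x
    by (auto intro!: derivative_eq_intros D simp: algebra_simps)
  then show D1: "deriv (sol u0 t) = (\<lambda>x. (F (gauss_deriv t) x
            - exp (- x) * (G (gauss_deriv t) x - G (gauss t) x)) / sqrt (4 * pi * t))"
    unfolding sol by (intro ext DERIV_imp_deriv DERIV_cdivide)
  have "((\<lambda>x. F (gauss_deriv t) x - exp (- x) * (G (gauss_deriv t) x - G (gauss t) x))
          has_real_derivative F (gauss_deriv2 t) x
            - exp (- x) * (G (gauss_deriv2 t) x - 2 * G (gauss_deriv t) x + G (gauss t) x)) (at x)"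
    for x
    by (auto intro!: derivative_eq_intros D simp: algebra_simps)
  then show "deriv (deriv (sol u0 t)) = (\<lambda>x. (F (gauss_deriv2 t) x
            - exp (- x) * (G (gauss_deriv2 t) x - 2 * G (gauss_deriv t) x + G (gauss t) x))
            / sqrt (4 * pi * t))"
    unfolding D1 by (intro ext DERIV_imp_deriv DERIV_cdivide)
qed

lemma abs_diff_exp_neg_mult_le:
  fixes x a b :: real
  assumes "0 \<le> x"
  shows "\<bar>a - exp (- x) * b\<bar> \<le> \<bar>a\<bar> + \<bar>b\<bar>"
proof -
  have "\<bar>exp (- x) * b\<bar> \<le> \<bar>b\<bar>"
    using assms by (simp add: abs_mult mult_left_le_one_le)
  then show ?thesis
    by linarith
qed

lemma sol_W2inf_bound:
  assumes "L2_pos u0" "1 \<le> t" "0 < x"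
  defines "M \<equiv> sqrt (LBINT y:{0<..}. (u0 y)\<^sup>2) * sqrt (5 * sqrt (4 * pi * t))"
  shows "\<bar>sol u0 t x\<bar> \<le> 5 * M / sqrt (4 * pi * t)"
    and "\<bar>deriv (sol u0 t) x\<bar> \<le> 5 * M / sqrt (4 * pi * t)"
    and "\<bar>deriv (deriv (sol u0 t)) x\<bar> \<le> 5 * M / sqrt (4 * pi * t)"
proof -
  define F where "F = (\<lambda>q. kernel_integral (zero_ext u0) q (-1) t)"
  define G where "G = (\<lambda>q. kernel_integral (zero_ext u0) q 1 (- t))"
  have t: "0 < t"
    using assms(2) by simp
  have "\<bar>F q x\<bar> \<le> M" "\<bar>G q x\<bar> \<le> M" if "gauss_dominated t q" for q
    using abs_kernel_integral_gauss_dominated_le(2)[OF L2_pos_zero_ext(1,2)[OF assms(1)] t that]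
    by (simp_all add: F_def G_def M_def L2_pos_zero_ext(3)[OF assms(1)])
  note bounds = this[OF gauss_dominated_gauss[OF t]] this[OF gauss_dominated_gauss_deriv[OF assms(2)]]
    this[OF gauss_dominated_gauss_deriv2[OF assms(2)]]
  note damp = abs_diff_exp_neg_mult_le[OF less_imp_le[OF assms(3)]]
  have num0: "\<bar>F (gauss t) x - exp (- x) * G (gauss t) x\<bar> \<le> 5 * M"
    using bounds(1,2) damp[of "F (gauss t) x" "G (gauss t) x"] by linarith
  have num1: "\<bar>F (gauss_deriv t) x - exp (- x) * (G (gauss_deriv t) x - G (gauss t) x)\<bar> \<le> 5 * M"
    using bounds(2-4) damp[of "F (gauss_deriv t) x" "G (gauss_deriv t) x - G (gauss t) x"]
      abs_triangle_ineq4[of "G (gauss_deriv t) x" "G (gauss t) x"] by linarith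
  have num2: "\<bar>F (gauss_deriv2 t) x
          - exp (- x) * (G (gauss_deriv2 t) x - 2 * G (gauss_deriv t) x + G (gauss t) x)\<bar> \<le> 5 * M"
    using bounds(2,4-6)
      damp[of "F (gauss_deriv2 t) x" "G (gauss_deriv2 t) x - 2 * G (gauss_deriv t) x + G (gauss t) x"]
      abs_triangle_ineq[of "G (gauss_deriv2 t) x - 2 * G (gauss_deriv t) x" "G (gauss t) x"]
      abs_triangle_ineq4[of "G (gauss_deriv2 t) x" "2 * G (gauss_deriv t) x"]
    by (simp add: abs_mult)
  have scale: "\<bar>N / sqrt (4 * pi * t)\<bar> \<le> 5 * M / sqrt (4 * pi * t)" if "\<bar>N\<bar> \<le> 5 * M" for N
    using that t by (simp add: abs_divide divide_right_mono)
  show "\<bar>sol u0 t x\<bar> \<le> 5 * M / sqrt (4 * pi * t)"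
    using sol_eq_kernel_integrals[OF assms(1) t] scale[OF num0] by (simp add: F_def G_def)
  show "\<bar>deriv (sol u0 t) x\<bar> \<le> 5 * M / sqrt (4 * pi * t)"
    using deriv_sol(1)[OF assms(1,2)] scale[OF num1] by (simp add: F_def G_def)
  show "\<bar>deriv (deriv (sol u0 t)) x\<bar> \<le> 5 * M / sqrt (4 * pi * t)"
    using deriv_sol(2)[OF assms(1,2)] scale[OF num2] by (simp add: F_def G_def)
qed

theorem lemma4p3:
  fixes u0 :: "real \<Rightarrow> real"
  assumes "H2_pos u0"
  shows "\<forall>\<epsilon>>0. \<forall>\<^sub>F t in at_top. \<forall>x>0.
           \<bar>sol u0 t x\<bar> \<le> \<epsilon> \<and>
           \<bar>deriv (sol u0 t) x\<bar> \<le> \<epsilon> \<and>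
           \<bar>deriv (deriv (sol u0 t)) x\<bar> \<le> \<epsilon>"
proof (intro allI impI)
  fix \<epsilon> :: real
  assume "0 < \<epsilon>"
  have L2: "L2_pos u0"
    using assms by (simp add: H2_pos_def)
  define A where "A = (LBINT y:{0<..}. (u0 y)\<^sup>2)"
  have "((\<lambda>t. 5 * (sqrt A * sqrt (5 * sqrt (4 * pi * t))) / sqrt (4 * pi * t)) \<longlongrightarrow> 0) at_top"
    by real_asymp
  then have "\<forall>\<^sub>F t in at_top. 5 * (sqrt A * sqrt (5 * sqrt (4 * pi * t))) / sqrt (4 * pi * t) < \<epsilon>"
    using \<open>0 < \<epsilon>\<close> by (rule order_tendstoD)
  moreover have "\<forall>\<^sub>F t in at_top. 1 \<le> (t::real)"
    by (rule eventually_ge_at_top)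
  ultimately show "\<forall>\<^sub>F t in at_top. \<forall>x>0. \<bar>sol u0 t x\<bar> \<le> \<epsilon> \<and> \<bar>deriv (sol u0 t) x\<bar> \<le> \<epsilon>
                     \<and> \<bar>deriv (deriv (sol u0 t)) x\<bar> \<le> \<epsilon>"
    by eventually_elim (use sol_W2inf_bound[OF L2] in \<open>fastforce simp: A_def\<close>)
qed

end
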